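(* Let $(f,\bar f)\colon(G,P_G)\to(H,P_H)$ be a regular epimorphism in $\mathsf{PreOrdGrp}$. Then $\bar f\colon P_G\to P_H$ is a special homogeneous surjection in the category $\mathsf{Mon}$ of monoids if and only if for all $x,y\in P_G$ with $f(x)=f(y)$ one has $y-x\in P_G$ and $-x+y\in P_G$.
   Context: A preordered group is a pair $(G,P_G)$ with $G$ an additively written group (not necessarily abelian) and $P_G\subseteq G$ a submonoid closed under conjugation; a morphism $(f,\bar f)$ is a group homomorphism $f$ with $f(P_G)\subseteq P_H$, $\bar f$ its restriction to positive cones. This is $\mathsf{PreOrdGrp}$; its regular epimorphisms are the morphisms with $f$ and $\bar f$ both surjective. A split epimorphism of monoids $g\colon X\to Y$ with section $s$ and kernel $K=g^{-1}(0)$ is homogeneous if for every $y\in Y$ the maps $K\to g^{-1}(y)$, $x\mapsto x+s(y)$ and $x\mapsto s(y)+x$, are bijections. A surjective monoid homomorphism $g\colon X\to Y$ is a special homogeneous surjection if the first projection $\pi_1\colon Eq(g)\to X$ of its kernel pair $Eq(g)=\{(x,x')\in X\times X: g(x)=g(x')\}$, with section the diagonal $x\mapsto(x,x)$, is a homogeneous split epimorphism. *)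

theory Defs
  imports Main "HOL-Library.Product_Plus"
begin

(* Monoids are represented as submonoids of an ambient additive monoid type;
   the monoid operation is the inherited + and the unit is 0. *)

definition submonoid :: "'a::monoid_add set \<Rightarrow> bool" where
  "submonoid X \<longleftrightarrow> 0 \<in> X \<and> (\<forall>a\<in>X. \<forall>b\<in>X. a + b \<in> X)"

definition monoid_hom_on :: "'a::monoid_add set \<Rightarrow> 'b::monoid_add set \<Rightarrow> ('a \<Rightarrow> 'b) \<Rightarrow> bool" where
  "monoid_hom_on X Y g \<longleftrightarrow> g ` X \<subseteq> Y \<and> g 0 = 0 \<and> (\<forall>a\<in>X. \<forall>b\<in>X. g (a + b) = g a + g b)"

definition homogeneous_split_epi ::
  "'a::monoid_add set \<Rightarrow> 'b::monoid_add set \<Rightarrow> ('a \<Rightarrow> 'b) \<Rightarrow> ('b \<Rightarrow> 'a) \<Rightarrow> bool" where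
  "homogeneous_split_epi X Y g s \<longleftrightarrow>
     submonoid X \<and> submonoid Y \<and> monoid_hom_on X Y g \<and> monoid_hom_on Y X s \<and>
     (\<forall>y\<in>Y. g (s y) = y) \<and>
     (\<forall>y\<in>Y. bij_betw (\<lambda>k. k + s y) {k\<in>X. g k = 0} {x\<in>X. g x = y} \<and>
             bij_betw (\<lambda>k. s y + k) {k\<in>X. g k = 0} {x\<in>X. g x = y})"

definition kernel_pair :: "'a::monoid_add set \<Rightarrow> ('a \<Rightarrow> 'b) \<Rightarrow> ('a \<times> 'a) set" where
  "kernel_pair X g = {(x, x'). x \<in> X \<and> x' \<in> X \<and> g x = g x'}"

definition special_homogeneous_surjection ::
  "'a::monoid_add set \<Rightarrow> 'b::monoid_add set \<Rightarrow> ('a \<Rightarrow> 'b) \<Rightarrow> bool" where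
  "special_homogeneous_surjection X Y g \<longleftrightarrow>
     submonoid X \<and> submonoid Y \<and> monoid_hom_on X Y g \<and> g ` X = Y \<and>
     homogeneous_split_epi (kernel_pair X g) X fst (\<lambda>x. (x, x))"

(* preordered group: positive cone is a submonoid closed under conjugation *)
definition preordered_group :: "'a::group_add set \<Rightarrow> bool" where
  "preordered_group P \<longleftrightarrow> submonoid P \<and> (\<forall>g. \<forall>p\<in>P. g + p - g \<in> P)"

definition group_hom :: "('a::group_add \<Rightarrow> 'b::group_add) \<Rightarrow> bool" where
  "group_hom f \<longleftrightarrow> (\<forall>a b. f (a + b) = f a + f b)"

definition preord_regular_epi :: "'a::group_add set \<Rightarrow> 'b::group_add set \<Rightarrow> ('a \<Rightarrow> 'b) \<Rightarrow> bool" where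
  "preord_regular_epi PG PH f \<longleftrightarrow>
     preordered_group PG \<and> preordered_group PH \<and> group_hom f \<and>
     f ` PG \<subseteq> PH \<and> surj f \<and> f ` PG = PH"

end

theory Submission
  imports Defs
begin

(* In the kernel pair, the kernel of fst is Pair 0 ` {b. f b = f 0} and the fibre over y is
   Pair y ` {b. f b = f y}. Translation by the diagonal element (y, y) is injective in the
   ambient group, so homogeneity is surjectivity: every b with f b = f y must be c + y
   (resp. y + c) with c in the kernel, i.e. b - y (resp. - y + b) must lie in the cone; its
   image under f is then 0 by cancellation. *)

lemma submonoid_kernel_pair:
  assumes "submonoid X" and "monoid_hom_on X Y g"
  shows "submonoid (kernel_pair X g)"
  using assms unfolding submonoid_def monoid_hom_on_def kernel_pair_def
  by (auto simp: zero_prod_def)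

lemma monoid_hom_on_fst_kernel_pair: "monoid_hom_on (kernel_pair X g) X fst"
  unfolding monoid_hom_on_def kernel_pair_def by (auto simp: zero_prod_def)

lemma monoid_hom_on_diagonal_kernel_pair:
  assumes "submonoid X"
  shows "monoid_hom_on X (kernel_pair X g) (\<lambda>x. (x, x))"
  using assms unfolding submonoid_def monoid_hom_on_def kernel_pair_def
  by (auto simp: zero_prod_def)

lemma kernel_pair_fst_fibre:
  assumes "y \<in> X"
  shows "{p \<in> kernel_pair X g. fst p = y} = Pair y ` {b \<in> X. g b = g y}"
  using assms unfolding kernel_pair_def by auto

lemma homogeneous_split_epi_kernel_pair_iff:
  assumes "submonoid X" and "monoid_hom_on X Y g"
  shows "homogeneous_split_epi (kernel_pair X g) X fst (\<lambda>x. (x, x)) \<longleftrightarrow>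
    (\<forall>y\<in>X. bij_betw (\<lambda>k. k + (y, y)) (Pair 0 ` {b \<in> X. g b = g 0}) (Pair y ` {b \<in> X. g b = g y}) \<and>
           bij_betw (\<lambda>k. (y, y) + k) (Pair 0 ` {b \<in> X. g b = g 0}) (Pair y ` {b \<in> X. g b = g y}))"
proof -
  have "0 \<in> X" using assms(1) unfolding submonoid_def by blast
  then show ?thesis
    unfolding homogeneous_split_epi_def
    by (simp add: assms(1) submonoid_kernel_pair[OF assms] monoid_hom_on_fst_kernel_pair
        monoid_hom_on_diagonal_kernel_pair[OF assms(1)] kernel_pair_fst_fibre)
qed

lemma image_add_right_kernel_eq_fibre_iff:
  fixes X :: "'a::group_add set" and g :: "'a \<Rightarrow> 'b::{monoid_add, cancel_semigroup_add}"
  assumes "submonoid X" and "monoid_hom_on X Y g" and "y \<in> X"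
  shows "(\<lambda>b. b + y) ` {b \<in> X. g b = g 0} = {b \<in> X. g b = g y} \<longleftrightarrow>
    (\<forall>b\<in>X. g b = g y \<longrightarrow> b - y \<in> X)"
proof
  assume image: "(\<lambda>b. b + y) ` {b \<in> X. g b = g 0} = {b \<in> X. g b = g y}"
  show "\<forall>b\<in>X. g b = g y \<longrightarrow> b - y \<in> X"
  proof (intro ballI impI)
    fix b assume "b \<in> X" and "g b = g y"
    then obtain c where "c \<in> X" and "b = c + y" using image by blast
    then show "b - y \<in> X" by simp
  qed
next
  assume diff: "\<forall>b\<in>X. g b = g y \<longrightarrow> b - y \<in> X"
  have g0: "g 0 = 0" and g_add: "\<And>a b. a \<in> X \<Longrightarrow> b \<in> X \<Longrightarrow> g (a + b) = g a + g b"
    using assms(2) unfolding monoid_hom_on_def by auto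
  have add_closed: "\<And>a b. a \<in> X \<Longrightarrow> b \<in> X \<Longrightarrow> a + b \<in> X"
    using assms(1) unfolding submonoid_def by blast
  show "(\<lambda>b. b + y) ` {b \<in> X. g b = g 0} = {b \<in> X. g b = g y}"
  proof (intro equalityI subsetI)
    fix c assume "c \<in> (\<lambda>b. b + y) ` {b \<in> X. g b = g 0}"
    then show "c \<in> {b \<in> X. g b = g y}" using assms(3) g0 g_add add_closed by auto
  next
    fix b assume b: "b \<in> {b \<in> X. g b = g y}"
    then have "b - y \<in> X" using diff by blast
    moreover have "g (b - y) = g 0"
    proof -
      have "g (b - y) + g y = 0 + g y"
        using g_add[OF \<open>b - y \<in> X\<close> assms(3)] b by simp
      then show ?thesis using g0 by (simp add: add_right_imp_eq)
    qed
    ultimately show "b \<in> (\<lambda>b. b + y) ` {b \<in> X. g b = g 0}"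
      by (intro image_eqI[of _ _ "b - y"]) simp_all
  qed
qed

lemma image_add_left_kernel_eq_fibre_iff:
  fixes X :: "'a::group_add set" and g :: "'a \<Rightarrow> 'b::{monoid_add, cancel_semigroup_add}"
  assumes "submonoid X" and "monoid_hom_on X Y g" and "y \<in> X"
  shows "(\<lambda>b. y + b) ` {b \<in> X. g b = g 0} = {b \<in> X. g b = g y} \<longleftrightarrow>
    (\<forall>b\<in>X. g b = g y \<longrightarrow> - y + b \<in> X)"
proof
  assume image: "(\<lambda>b. y + b) ` {b \<in> X. g b = g 0} = {b \<in> X. g b = g y}"
  show "\<forall>b\<in>X. g b = g y \<longrightarrow> - y + b \<in> X"
  proof (intro ballI impI)
    fix b assume "b \<in> X" and "g b = g y"
    then obtain c where "c \<in> X" and "b = y + c" using image by blast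
    then show "- y + b \<in> X" by (simp add: add.assoc[symmetric])
  qed
next
  assume diff: "\<forall>b\<in>X. g b = g y \<longrightarrow> - y + b \<in> X"
  have g0: "g 0 = 0" and g_add: "\<And>a b. a \<in> X \<Longrightarrow> b \<in> X \<Longrightarrow> g (a + b) = g a + g b"
    using assms(2) unfolding monoid_hom_on_def by auto
  have add_closed: "\<And>a b. a \<in> X \<Longrightarrow> b \<in> X \<Longrightarrow> a + b \<in> X"
    using assms(1) unfolding submonoid_def by blast
  show "(\<lambda>b. y + b) ` {b \<in> X. g b = g 0} = {b \<in> X. g b = g y}"
  proof (intro equalityI subsetI)
    fix c assume "c \<in> (\<lambda>b. y + b) ` {b \<in> X. g b = g 0}"
    then show "c \<in> {b \<in> X. g b = g y}" using assms(3) g0 g_add add_closed by auto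
  next
    fix b assume b: "b \<in> {b \<in> X. g b = g y}"
    then have "- y + b \<in> X" using diff by blast
    moreover have "g (- y + b) = g 0"
    proof -
      have "g y + g (- y + b) = g y + 0"
        using g_add[OF assms(3) \<open>- y + b \<in> X\<close>] b by (simp add: add.assoc[symmetric])
      then show ?thesis using g0 by (simp add: add_left_imp_eq)
    qed
    ultimately show "b \<in> (\<lambda>b. y + b) ` {b \<in> X. g b = g 0}"
      by (intro image_eqI[of _ _ "- y + b"]) (simp_all add: add.assoc[symmetric])
  qed
qed

lemma bij_betw_add_right_Pair_iff:
  fixes y :: "'a::group_add"
  shows "bij_betw (\<lambda>k. k + (y, y)) (Pair 0 ` A) (Pair y ` B) \<longleftrightarrow> (\<lambda>b. b + y) ` A = B"
proof -
  have "(\<lambda>k. k + (y, y)) ` Pair 0 ` A = Pair y ` (\<lambda>b. b + y) ` A"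
    by (auto simp: image_image)
  moreover have "inj_on (\<lambda>k. k + (y, y)) (Pair 0 ` A)"
    by (rule inj_onI) simp
  ultimately show ?thesis
    by (simp add: bij_betw_def inj_image_eq_iff inj_on_def)
qed

lemma bij_betw_add_left_Pair_iff:
  fixes y :: "'a::group_add"
  shows "bij_betw (\<lambda>k. (y, y) + k) (Pair 0 ` A) (Pair y ` B) \<longleftrightarrow> (\<lambda>b. y + b) ` A = B"
proof -
  have "(\<lambda>k. (y, y) + k) ` Pair 0 ` A = Pair y ` (\<lambda>b. y + b) ` A"
    by (auto simp: image_image)
  moreover have "inj_on (\<lambda>k. (y, y) + k) (Pair 0 ` A)"
    by (rule inj_onI) simp
  ultimately show ?thesis
    by (simp add: bij_betw_def inj_image_eq_iff inj_on_def)
qed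

lemma special_homogeneous_surjection_iff:
  fixes X :: "'a::group_add set" and g :: "'a \<Rightarrow> 'b::{monoid_add, cancel_semigroup_add}"
  assumes "submonoid X" and "submonoid Y" and "monoid_hom_on X Y g" and "g ` X = Y"
  shows "special_homogeneous_surjection X Y g \<longleftrightarrow>
    (\<forall>x\<in>X. \<forall>y\<in>X. g x = g y \<longrightarrow> y - x \<in> X \<and> - x + y \<in> X)"
proof -
  let ?K = "{b \<in> X. g b = g 0}" and ?F = "\<lambda>y. {b \<in> X. g b = g y}"
  have "special_homogeneous_surjection X Y g \<longleftrightarrow>
      homogeneous_split_epi (kernel_pair X g) X fst (\<lambda>x. (x, x))"
    using assms unfolding special_homogeneous_surjection_def by simp
  also have "\<dots> \<longleftrightarrow> (\<forall>y\<in>X. (\<lambda>b. b + y) ` ?K = ?F y \<and> (\<lambda>b. y + b) ` ?K = ?F y)"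
    by (simp only: homogeneous_split_epi_kernel_pair_iff[OF assms(1,3)]
        bij_betw_add_right_Pair_iff bij_betw_add_left_Pair_iff)
  also have "\<dots> \<longleftrightarrow> (\<forall>y\<in>X. \<forall>b\<in>X. g b = g y \<longrightarrow> b - y \<in> X \<and> - y + b \<in> X)"
    by (simp add: image_add_right_kernel_eq_fibre_iff[OF assms(1,3)]
        image_add_left_kernel_eq_fibre_iff[OF assms(1,3)] ball_conj_distrib imp_conjR)
  finally show ?thesis by (simp add: eq_commute)
qed

theorem lemma6p2:
  fixes f :: "'a::group_add \<Rightarrow> 'b::group_add"
    and PG :: "'a set" and PH :: "'b set"
  assumes "preord_regular_epi PG PH f"
  shows "special_homogeneous_surjection PG PH f \<longleftrightarrow>
           (\<forall>x\<in>PG. \<forall>y\<in>PG. f x = f y \<longrightarrow> y - x \<in> PG \<and> - x + y \<in> PG)"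
proof (rule special_homogeneous_surjection_iff)
  have "submonoid PG" "submonoid PH" and hom: "group_hom f" and onto: "f ` PG = PH"
    using assms unfolding preord_regular_epi_def preordered_group_def by simp_all
  then show "submonoid PG" "submonoid PH" "f ` PG = PH" by simp_all
  have "f 0 = 0"
    using hom unfolding group_hom_def by (metis add.right_neutral add_left_cancel)
  with hom onto show "monoid_hom_on PG PH f"
    unfolding group_hom_def monoid_hom_on_def by simp
qed

end
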